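(* Let $n\ge1$, $m\ge0$ and let $v,u$ be vertices of the Yoke graph $Y_{n,m}$. Then $d_{Y_{n,m}}(v,u)=d_{Z_{n,m}}(v-u,0)$, where $v-u=(v_0-u_0,\dots,v_{m+1}-u_{m+1})$ (differences in coordinates $0,m+1$ taken in $\mathbb{Z}_n$, in coordinates $1,\dots,m$ in $\mathbb{Z}$), which is a vertex of $Z_{n,m}$, and $d_G$ denotes graph distance in $G$.
   Context: Elements of $\mathbb{Z}_n$ are identified with representatives in $\{0,\dots,n-1\}$. For $S\subseteq\mathbb{Z}$, consider vertices $u=(u_0,\dots,u_{m+1})\in\mathbb{Z}_n\times S^m\times\mathbb{Z}_n$ with $\sum u_i\equiv0\pmod n$; $u,v$ adjacent if there is $0\leq i\leq m$ with $u_j=v_j$ for $j\notin\{i,i+1\}$ and either ($u_i=v_i+1$, $u_{i+1}=v_{i+1}-1$) or ($u_i=v_i-1$, $u_{i+1}=v_{i+1}+1$), arithmetic in coordinates $0,m+1$ being in $\mathbb{Z}_n$ and in coordinates $1,\dots,m$ in $\mathbb{Z}$. $Y_{n,m}$ is the case $S=\{0,1\}$ and $Z_{n,m}$ the case $S=\{-1,0,1\}$. $0$ is the all-zero vertex. *)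

theory Defs
  imports Main "HOL-Library.Extended_Nat"
begin

text \<open>Vertices are integer lists of length m+2, indexed 0..m+1. Coordinates 0 and m+1
  are elements of Z_n represented in {0..n-1}; coordinates 1..m lie in S.\<close>

definition vert :: "nat \<Rightarrow> nat \<Rightarrow> int set \<Rightarrow> int list set" where
  "vert n m S = {u. length u = m + 2 \<and> u ! 0 \<in> {0..<int n} \<and> u ! (m+1) \<in> {0..<int n}
      \<and> (\<forall>j\<in>{1..m}. u ! j \<in> S) \<and> sum_list u mod int n = 0}"

definition cnorm :: "nat \<Rightarrow> nat \<Rightarrow> nat \<Rightarrow> int \<Rightarrow> int" where
  "cnorm n m j x = (if j = 0 \<or> j = m + 1 then x mod int n else x)"

definition adj :: "nat \<Rightarrow> nat \<Rightarrow> int set \<Rightarrow> int list \<Rightarrow> int list \<Rightarrow> bool" where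
  "adj n m S u v \<longleftrightarrow> u \<in> vert n m S \<and> v \<in> vert n m S \<and>
     (\<exists>i\<le>m. (\<forall>j<m+2. j \<noteq> i \<and> j \<noteq> i + 1 \<longrightarrow> u ! j = v ! j) \<and>
        ((u ! i = cnorm n m i (v ! i + 1) \<and> u ! (i+1) = cnorm n m (i+1) (v ! (i+1) - 1)) \<or>
         (u ! i = cnorm n m i (v ! i - 1) \<and> u ! (i+1) = cnorm n m (i+1) (v ! (i+1) + 1))))"

definition Yadj :: "nat \<Rightarrow> nat \<Rightarrow> int list \<Rightarrow> int list \<Rightarrow> bool" where
  "Yadj n m = adj n m {0, 1}"

definition Zadj :: "nat \<Rightarrow> nat \<Rightarrow> int list \<Rightarrow> int list \<Rightarrow> bool" where
  "Zadj n m = adj n m {-1, 0, 1}"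

definition gdist :: "('a \<Rightarrow> 'a \<Rightarrow> bool) \<Rightarrow> 'a \<Rightarrow> 'a \<Rightarrow> enat" where
  "gdist A x y = Inf {enat k | k. (A ^^ k) x y}"

definition vsub :: "nat \<Rightarrow> nat \<Rightarrow> int list \<Rightarrow> int list \<Rightarrow> int list" where
  "vsub n m v u = map (\<lambda>j. cnorm n m j (v ! j - u ! j)) [0..<m+2]"

end

theory Submission
  imports Defs
begin

text \<open>A walk in either graph induces a flow: an integer f j for every edge between coordinates j
  and j + 1, counting the net number of units moved across it, whose cost, the sum of the
  absolute values of the f j, is at most the length of the walk. Flows from v to u are the same
  as flows from v - u to 0, and subtracting u maps edges of Y to edges of Z. Conversely, a flow
  between two vertices of Y is realised greedily by a walk of exactly its cost: while the flow
  is nonzero, following a run of positive (or negative) flow leads to a place where one unit can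
  be moved in the direction of the flow without leaving {0, 1}. Hence both distances equal the
  least cost of a flow from v to u.\<close>

lemma cnorm_dvd: "int n dvd cnorm n m j t - t"
  unfolding cnorm_def by (auto simp: mod_eq_dvd_iff[symmetric])

lemma cnorm_mod: "cnorm n m j t mod int n = t mod int n"
  unfolding cnorm_def by auto

lemma cnorm_cnorm_add: "cnorm n m j (cnorm n m j a + b) = cnorm n m j (a + b)"
  unfolding cnorm_def by (auto simp: mod_add_left_eq)

lemma cnorm_cnorm_diff: "cnorm n m j (cnorm n m j a - b) = cnorm n m j (a - b)"
  unfolding cnorm_def by (auto simp: mod_diff_left_eq)

lemma cnorm_inner: "1 \<le> j \<Longrightarrow> j \<le> m \<Longrightarrow> cnorm n m j t = t"
  unfolding cnorm_def by auto

lemma cnorm_outer_range: "n \<ge> 1 \<Longrightarrow> j = 0 \<or> j = m + 1 \<Longrightarrow> cnorm n m j t \<in> {0..<int n}"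
  unfolding cnorm_def by auto

lemma cnorm_vert: "v \<in> vert n m S \<Longrightarrow> j < m + 2 \<Longrightarrow> cnorm n m j (v ! j) = v ! j"
  unfolding cnorm_def vert_def by auto

lemma vsub_nth: "j < m + 2 \<Longrightarrow> vsub n m v u ! j = cnorm n m j (v ! j - u ! j)"
  unfolding vsub_def by (simp del: upt_Suc)

lemma vsub_self: "vsub n m u u = replicate (m + 2) 0"
  by (rule nth_equalityI) (auto simp: vsub_def cnorm_def simp del: upt_Suc replicate_Suc)

lemma sum_list_eq_sum_nth: "length v = m + 2 \<Longrightarrow> sum_list v = (\<Sum>j<m + 2. v ! j)"
  by (simp add: sum_list_sum_nth atLeast0LessThan)

lemma vsub_vert:
  assumes n: "n \<ge> 1" and v: "v \<in> vert n m S" and u: "u \<in> vert n m T"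
  shows "vsub n m v u \<in> vert n m {a - b |a b. a \<in> S \<and> b \<in> T}"
proof -
  have len: "length (vsub n m v u) = m + 2" by (simp add: vsub_def)
  have "vsub n m v u ! j \<in> {a - b |a b. a \<in> S \<and> b \<in> T}" if j: "j \<in> {1..m}" for j
  proof -
    have "v ! j \<in> S" "u ! j \<in> T" using v u j by (auto simp: vert_def)
    then show ?thesis using j by (auto simp: vsub_nth cnorm_inner)
  qed
  moreover have "sum_list (vsub n m v u) mod int n = 0"
  proof -
    have "sum_list (vsub n m v u) = (\<Sum>j<m + 2. cnorm n m j (v ! j - u ! j))"
      using len by (simp add: sum_list_eq_sum_nth vsub_nth)
    then have "sum_list (vsub n m v u) mod int n
        = (\<Sum>j<m + 2. cnorm n m j (v ! j - u ! j) mod int n) mod int n"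
      by (simp only: mod_sum_eq)
    also have "\<dots> = (\<Sum>j<m + 2. v ! j - u ! j) mod int n"
      by (simp only: cnorm_mod mod_sum_eq)
    also have "\<dots> = (sum_list v - sum_list u) mod int n"
      using v u by (simp add: vert_def sum_list_eq_sum_nth sum_subtractf)
    also have "\<dots> = 0"
      using v u by (simp add: vert_def mod_diff_eq[symmetric])
    finally show ?thesis .
  qed
  ultimately show ?thesis
    using len cnorm_outer_range[OF n] by (simp add: vert_def vsub_nth)
qed

section \<open>Moving one unit between neighbouring coordinates\<close>

definition move_unit :: "nat \<Rightarrow> nat \<Rightarrow> nat \<Rightarrow> int \<Rightarrow> int list \<Rightarrow> int list" where
  "move_unit n m j d x =
     x[j := cnorm n m j (x ! j + d), j + 1 := cnorm n m (j + 1) (x ! (j + 1) - d)]"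

lemma length_move_unit [simp]: "length (move_unit n m j d x) = length x"
  by (simp add: move_unit_def)

lemma move_unit_nth:
  assumes "length x = m + 2" "j \<le> m" "k < m + 2"
  shows "move_unit n m j d x ! k =
    (if k = j then cnorm n m j (x ! j + d)
     else if k = j + 1 then cnorm n m (j + 1) (x ! (j + 1) - d) else x ! k)"
  using assms by (auto simp: move_unit_def nth_list_update)

lemma sum_list_list_update:
  fixes xs :: "'a::ab_group_add list"
  shows "k < length xs \<Longrightarrow> sum_list (xs[k := x]) = sum_list xs + x - xs ! k"
  by (induction xs arbitrary: k) (auto split: nat.split)

lemma move_unit_vert:
  assumes n: "n \<ge> 1" and x: "x \<in> vert n m S" and j: "j \<le> m"
    and left: "j = 0 \<or> x ! j + d \<in> S" and right: "j = m \<or> x ! (j + 1) - d \<in> S"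
  shows "move_unit n m j d x \<in> vert n m S"
proof -
  let ?y = "move_unit n m j d x"
  have len: "length x = m + 2" using x by (simp add: vert_def)
  have nth: "?y ! k = (if k = j then cnorm n m j (x ! j + d)
     else if k = j + 1 then cnorm n m (j + 1) (x ! (j + 1) - d) else x ! k)" if "k < m + 2" for k
    using move_unit_nth[OF len j that] .
  have first: "?y ! 0 \<in> {0..<int n}"
    using nth[of 0] x cnorm_outer_range[OF n] by (cases "j = 0") (simp_all add: vert_def)
  have last: "?y ! (m + 1) \<in> {0..<int n}"
    using nth[of "m + 1"] x j cnorm_outer_range[OF n] by (cases "j = m") (simp_all add: vert_def)
  have inner: "?y ! k \<in> S" if k: "k \<in> {1..m}" for k
  proof -
    consider "k = j" | "k = j + 1" | "k \<noteq> j" "k \<noteq> j + 1" by blast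
    then show ?thesis
    proof cases
      case 1
      then show ?thesis using k left nth[of k] by (simp add: cnorm_inner)
    next
      case 2
      then show ?thesis using k right nth[of k] by (simp add: cnorm_inner)
    next
      case 3
      then show ?thesis using k x nth[of k] by (simp add: vert_def)
    qed
  qed
  have "sum_list ?y = sum_list x + (cnorm n m j (x ! j + d) - (x ! j + d))
      + (cnorm n m (j + 1) (x ! (j + 1) - d) - (x ! (j + 1) - d))"
    using len j by (simp add: move_unit_def sum_list_list_update nth_list_update)
  moreover have "int n dvd sum_list x"
    using x by (simp add: vert_def dvd_eq_mod_eq_0)
  ultimately have "int n dvd sum_list ?y"
    by (simp only:) (intro dvd_add cnorm_dvd)
  then show ?thesis
    using len first last inner by (simp add: vert_def)
qed

lemma adj_move_unit:
  assumes x: "x \<in> vert n m S" and y: "move_unit n m j d x \<in> vert n m S"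
    and j: "j \<le> m" and d: "d \<in> {1, -1}"
  shows "adj n m S x (move_unit n m j d x)"
proof -
  have len: "length x = m + 2" using x by (simp add: vert_def)
  have "x ! j = cnorm n m j (move_unit n m j d x ! j - d)"
    "x ! (j + 1) = cnorm n m (j + 1) (move_unit n m j d x ! (j + 1) + d)"
    using j cnorm_vert[OF x, of j] cnorm_vert[OF x, of "j + 1"]
    by (simp_all add: move_unit_nth[OF len j] cnorm_cnorm_add cnorm_cnorm_diff)
  then show ?thesis
    using x y j d move_unit_nth[OF len j] unfolding adj_def by (auto intro!: exI[of _ j])
qed

lemma adj_imp_move_unit:
  assumes "adj n m S x y"
  obtains j d where "j \<le> m" "d \<in> {1, -1}" "y = move_unit n m j d x"
proof -
  obtain i where i: "i \<le> m" and x: "x \<in> vert n m S" and y: "y \<in> vert n m S"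
    and same: "\<forall>k<m + 2. k \<noteq> i \<and> k \<noteq> i + 1 \<longrightarrow> x ! k = y ! k"
    and step: "(x ! i = cnorm n m i (y ! i + 1) \<and> x ! (i + 1) = cnorm n m (i + 1) (y ! (i + 1) - 1)) \<or>
      (x ! i = cnorm n m i (y ! i - 1) \<and> x ! (i + 1) = cnorm n m (i + 1) (y ! (i + 1) + 1))"
    using assms unfolding adj_def by blast
  have len: "length x = m + 2" "length y = m + 2" using x y by (simp_all add: vert_def)
  have yi: "cnorm n m i (y ! i) = y ! i" and yi1: "cnorm n m (i + 1) (y ! (i + 1)) = y ! (i + 1)"
    using cnorm_vert[OF y] i by simp_all
  from step obtain d where d: "d \<in> {1, -1}"
    and "y ! i = cnorm n m i (x ! i + d)" "y ! (i + 1) = cnorm n m (i + 1) (x ! (i + 1) - d)"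
  proof (elim disjE conjE)
    assume "x ! i = cnorm n m i (y ! i + 1)" "x ! (i + 1) = cnorm n m (i + 1) (y ! (i + 1) - 1)"
    then show thesis
      using that[of "-1"] yi yi1 by (simp add: cnorm_cnorm_add cnorm_cnorm_diff)
  next
    assume "x ! i = cnorm n m i (y ! i - 1)" "x ! (i + 1) = cnorm n m (i + 1) (y ! (i + 1) + 1)"
    then show thesis
      using that[of 1] yi yi1 by (simp add: cnorm_cnorm_add cnorm_cnorm_diff)
  qed
  then have "y = move_unit n m i d x"
    using len same i by (intro nth_equalityI) (auto simp: move_unit_nth)
  then show ?thesis using that i d by blast
qed

lemma vsub_move_unit:
  assumes "length x = m + 2" "j \<le> m"
  shows "vsub n m (move_unit n m j d x) u = move_unit n m j d (vsub n m x u)"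
proof (rule nth_equalityI)
  fix k assume "k < length (vsub n m (move_unit n m j d x) u)"
  then have k: "k < m + 2" by (simp add: vsub_def)
  have "length (vsub n m x u) = m + 2" by (simp add: vsub_def)
  then show "vsub n m (move_unit n m j d x) u ! k = move_unit n m j d (vsub n m x u) ! k"
    using assms k by (simp add: vsub_nth move_unit_nth cnorm_cnorm_add cnorm_cnorm_diff
        diff_add_eq diff_right_commute)
qed (simp add: vsub_def)

lemma adj_vsub:
  assumes n: "n \<ge> 1" and u: "u \<in> vert n m T" and xy: "adj n m S x y"
  shows "adj n m {a - b |a b. a \<in> S \<and> b \<in> T} (vsub n m x u) (vsub n m y u)"
proof -
  obtain j d where j: "j \<le> m" and d: "d \<in> {1, -1}" and y: "y = move_unit n m j d x"
    using adj_imp_move_unit[OF xy] .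
  have x: "x \<in> vert n m S" using xy by (simp add: adj_def)
  then have moved: "vsub n m y u = move_unit n m j d (vsub n m x u)"
    using y j vsub_move_unit by (simp add: vert_def)
  have "vsub n m y u \<in> vert n m {a - b |a b. a \<in> S \<and> b \<in> T}"
    using xy vsub_vert[OF n _ u] by (simp add: adj_def)
  then show ?thesis
    unfolding moved using adj_move_unit[OF vsub_vert[OF n x u] _ j d] by simp
qed

lemma relpowp_map:
  assumes "\<And>x y. A x y \<Longrightarrow> B (h x) (h y)"
  shows "(A ^^ k) x y \<Longrightarrow> (B ^^ k) (h x) (h y)"
proof (induction k arbitrary: y)
  case (Suc k)
  then show ?case using assms by (auto intro: relpowp_Suc_I)
qed simp

section \<open>Flows\<close>

text \<open>A flow f from x to y records in f j the net number of units moved from coordinate j + 1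
  to coordinate j; only the values for j \<le> m matter.\<close>

definition flow :: "nat \<Rightarrow> nat \<Rightarrow> int list \<Rightarrow> int list \<Rightarrow> (nat \<Rightarrow> int) \<Rightarrow> bool" where
  "flow n m x y f \<longleftrightarrow> int n dvd y ! 0 - x ! 0 - f 0
     \<and> (\<forall>j\<in>{1..m}. y ! j = x ! j + f j - f (j - 1))
     \<and> int n dvd y ! (m + 1) - x ! (m + 1) + f m"

definition flow_cost :: "nat \<Rightarrow> (nat \<Rightarrow> int) \<Rightarrow> nat" where
  "flow_cost m f = (\<Sum>j\<le>m. nat \<bar>f j\<bar>)"

lemma flow_zero: "flow n m x x (\<lambda>_. 0)"
  by (simp add: flow_def)

lemma flow_trans:
  assumes xy: "flow n m x y f" and yz: "flow n m y z g"
  shows "flow n m x z (\<lambda>j. f j + g j)"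
proof -
  have first: "z ! 0 - x ! 0 - (f 0 + g 0) = (y ! 0 - x ! 0 - f 0) + (z ! 0 - y ! 0 - g 0)"
    and last: "z ! (m + 1) - x ! (m + 1) + (f m + g m)
      = (y ! (m + 1) - x ! (m + 1) + f m) + (z ! (m + 1) - y ! (m + 1) + g m)"
    by simp_all
  have "int n dvd y ! 0 - x ! 0 - f 0" "int n dvd z ! 0 - y ! 0 - g 0"
    "int n dvd y ! (m + 1) - x ! (m + 1) + f m" "int n dvd z ! (m + 1) - y ! (m + 1) + g m"
    using xy yz by (simp_all add: flow_def)
  then have "int n dvd z ! 0 - x ! 0 - (f 0 + g 0)"
    and "int n dvd z ! (m + 1) - x ! (m + 1) + (f m + g m)"
    unfolding first last by (blast intro: dvd_add)+
  then show ?thesis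
    using xy yz by (simp add: flow_def)
qed

lemma flow_sym: "flow n m x y f \<Longrightarrow> flow n m y x (\<lambda>j. - f j)"
  unfolding flow_def by (auto simp: dvd_diff_commute[of _ "y ! 0"] dvd_diff_commute[of _ "y ! (m + 1)"]
      algebra_simps)

lemma flow_move_unit:
  assumes "length x = m + 2" "j \<le> m"
  shows "flow n m x (move_unit n m j d x) ((\<lambda>_. 0)(j := d))"
  using assms cnorm_dvd[of n m 0 "x ! 0 + d"] cnorm_dvd[of n m "m + 1" "x ! (m + 1) - d"]
  by (auto simp: flow_def move_unit_nth cnorm_inner algebra_simps)

lemma dvd_cnorm_diff_iff:
  "int n dvd cnorm n m j a - cnorm n m j b + c \<longleftrightarrow> int n dvd a - b + c"
proof -
  have "int n dvd (cnorm n m j a - a) - (cnorm n m j b - b)"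
    by (intro dvd_diff cnorm_dvd)
  moreover have "cnorm n m j a - cnorm n m j b + c
      = ((cnorm n m j a - a) - (cnorm n m j b - b)) + (a - b + c)"
    by simp
  ultimately show ?thesis
    using dvd_add_right_iff by metis
qed

lemma flow_vsub_iff: "flow n m (vsub n m x w) (vsub n m y w) f \<longleftrightarrow> flow n m x y f"
  using dvd_cnorm_diff_iff[of n m 0 "y ! 0 - w ! 0" "x ! 0 - w ! 0" "- f 0"]
    dvd_cnorm_diff_iff[of n m "m + 1" "y ! (m + 1) - w ! (m + 1)" "x ! (m + 1) - w ! (m + 1)" "f m"]
  by (auto simp: flow_def vsub_nth cnorm_inner)

lemma flow_cost_update:
  "i \<le> m \<Longrightarrow> flow_cost m (f(i := a)) + nat \<bar>f i\<bar> = flow_cost m f + nat \<bar>a\<bar>"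
  unfolding flow_cost_def by (simp add: sum.remove[of "{..m}" i])

lemma walk_imp_flow: "(adj n m S ^^ k) x y \<Longrightarrow> \<exists>f. flow n m x y f \<and> flow_cost m f \<le> k"
proof (induction k arbitrary: y)
  case 0
  then show ?case using flow_zero by (fastforce simp: flow_cost_def)
next
  case (Suc k)
  then obtain z where walk: "(adj n m S ^^ k) x z" and step: "adj n m S z y" by auto
  obtain f where f: "flow n m x z f" and cost: "flow_cost m f \<le> k"
    using Suc.IH[OF walk] by blast
  obtain j d where j: "j \<le> m" and d: "d \<in> {1, -1}" and y: "y = move_unit n m j d z"
    using adj_imp_move_unit[OF step] .
  have "length z = m + 2" using step by (simp add: adj_def vert_def)
  then have "flow n m x y (\<lambda>i. f i + ((\<lambda>_. 0)(j := d)) i)"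
    using flow_trans[OF f flow_move_unit] j y by blast
  moreover have "(\<lambda>i. f i + ((\<lambda>_. 0)(j := d)) i) = f(j := f j + d)"
    by auto
  moreover have "flow_cost m (f(j := f j + d)) \<le> Suc k"
    using flow_cost_update[OF j, of f "f j + d"] cost d by auto
  ultimately show ?case by auto
qed

section \<open>Realising a flow by a walk in the Yoke graph\<close>

lemma positive_flow_source:
  fixes a f :: "nat \<Rightarrow> int"
  assumes bits: "\<forall>j\<in>{1..m}. a j \<in> {0, 1} \<and> a j + f j - f (j - 1) \<in> {0, 1}"
  shows "i \<le> m \<Longrightarrow> f i > 0 \<Longrightarrow> \<exists>k\<le>m. f k > 0 \<and> (k = 0 \<or> a k = 0)"
proof (induction i)
  case (Suc i)
  show ?case
  proof (cases "f i > 0")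
    case True
    then show ?thesis using Suc by simp
  next
    case False
    have "a (Suc i) \<in> {0, 1}" "a (Suc i) + f (Suc i) - f i \<in> {0, 1}"
      using bspec[OF bits, of "Suc i"] Suc.prems(1) by auto
    then have "a (Suc i) = 0" using False Suc.prems(2) by auto
    then show ?thesis using Suc.prems by blast
  qed
qed blast

lemma positive_flow_movable:
  fixes a f :: "nat \<Rightarrow> int"
  assumes bits: "\<forall>j\<in>{1..m}. a j \<in> {0, 1} \<and> a j + f j - f (j - 1) \<in> {0, 1}"
  shows "k \<le> m \<Longrightarrow> f k > 0 \<Longrightarrow> k = 0 \<or> a k = 0 \<Longrightarrow>
    \<exists>j\<le>m. f j > 0 \<and> (j = 0 \<or> a j = 0) \<and> (j = m \<or> a (j + 1) = 1)"
proof (induction "m - k" arbitrary: k)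
  case (Suc l)
  show ?case
  proof (cases "a (k + 1) = 1")
    case True
    then show ?thesis using Suc.prems by blast
  next
    case False
    have k: "k + 1 \<in> {1..m}" using Suc.hyps(2) by simp
    then have "a (k + 1) \<in> {0, 1}" "a (k + 1) + f (k + 1) - f k \<in> {0, 1}"
      using bspec[OF bits, of "k + 1"] by auto
    then have "a (k + 1) = 0" "f (k + 1) > 0" using False Suc.prems(2) by auto
    then show ?thesis using Suc.hyps(1)[of "k + 1"] Suc.hyps(2) k by simp
  qed
qed auto

lemma movable_unit_exists:
  fixes a f :: "nat \<Rightarrow> int"
  assumes bits: "\<forall>j\<in>{1..m}. a j \<in> {0, 1} \<and> a j + f j - f (j - 1) \<in> {0, 1}"
    and i: "i \<le> m" "f i \<noteq> 0"
  shows "\<exists>j\<le>m. \<exists>d\<in>{1, -1}. sgn (f j) = d \<and> (j = 0 \<or> a j + d \<in> {0, 1})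
    \<and> (j = m \<or> a (j + 1) - d \<in> {0, 1})"
proof (cases "f i > 0")
  case True
  obtain k where "k \<le> m" "f k > 0" "k = 0 \<or> a k = 0"
    using positive_flow_source[OF bits i(1) True] by blast
  then obtain j where "j \<le> m" "f j > 0" "j = 0 \<or> a j = 0" "j = m \<or> a (j + 1) = 1"
    using positive_flow_movable[OF bits] by blast
  then have "j \<le> m" "sgn (f j) = 1" "j = 0 \<or> a j + 1 \<in> {0, 1}" "j = m \<or> a (j + 1) - 1 \<in> {0, 1}"
    by auto
  then show ?thesis by blast
next
  case False
  \<comment> \<open>Complementing the bits and negating the flow reduces this case to the positive one.\<close>
  let ?a = "\<lambda>j. 1 - a j" and ?f = "\<lambda>j. - f j"
  have bits': "\<forall>j\<in>{1..m}. ?a j \<in> {0, 1} \<and> ?a j + ?f j - ?f (j - 1) \<in> {0, 1}"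
    using bits by force
  have "?f i > 0" using i False by simp
  then obtain k where "k \<le> m" "?f k > 0" "k = 0 \<or> ?a k = 0"
    using positive_flow_source[OF bits' i(1)] by blast
  then obtain j where "j \<le> m" "?f j > 0" "j = 0 \<or> ?a j = 0" "j = m \<or> ?a (j + 1) = 1"
    using positive_flow_movable[OF bits'] by blast
  then have "j \<le> m" "sgn (f j) = -1" "j = 0 \<or> a j + -1 \<in> {0, 1}"
    "j = m \<or> a (j + 1) - -1 \<in> {0, 1}"
    by auto
  then show ?thesis by blast
qed

lemma int_eq_if_dvd_diff:
  fixes a b k :: int
  shows "a \<in> {0..<k} \<Longrightarrow> b \<in> {0..<k} \<Longrightarrow> k dvd a - b \<Longrightarrow> a = b"
  by (metis atLeastLessThan_iff mod_eq_dvd_iff mod_pos_pos_trivial)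

lemma flow_zero_eq:
  assumes x: "x \<in> vert n m S" and y: "y \<in> vert n m S"
    and f: "flow n m x y f" and zero: "\<forall>j\<le>m. f j = 0"
  shows "x = y"
proof (rule nth_equalityI)
  show len: "length x = length y" using x y by (simp add: vert_def)
  fix k assume "k < length x"
  then consider "k = 0" | "k = m + 1" | "k \<in> {1..m}"
    using x by (force simp: vert_def)
  then show "x ! k = y ! k"
  proof cases
    case 1
    then show ?thesis
      using x y f zero int_eq_if_dvd_diff[of "y ! 0" "int n" "x ! 0"] by (simp add: vert_def flow_def)
  next
    case 2
    then show ?thesis
      using x y f zero int_eq_if_dvd_diff[of "y ! (m + 1)" "int n" "x ! (m + 1)"]
      by (simp add: vert_def flow_def)
  next
    case 3
    moreover have "f k = 0" "f (k - 1) = 0"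
      using 3 zero by auto
    ultimately show ?thesis
      using f by (simp add: flow_def)
  qed
qed

lemma Yadj_step_along_flow:
  assumes n: "n \<ge> 1" and v: "v \<in> vert n m {0, 1}" and u: "u \<in> vert n m {0, 1}"
    and f: "flow n m v u f" and i: "i \<le> m" "f i \<noteq> 0"
  obtains w g where "w \<in> vert n m {0, 1}" "Yadj n m v w" "flow n m w u g"
    "Suc (flow_cost m g) = flow_cost m f"
proof -
  have bits: "\<forall>j\<in>{1..m}. v ! j \<in> {0, 1} \<and> v ! j + f j - f (j - 1) \<in> {0, 1}"
    using v u f by (auto simp: vert_def flow_def)
  obtain j d where j: "j \<le> m" and d: "d \<in> {1, -1}" and sgn: "sgn (f j) = d"
    and left: "j = 0 \<or> v ! j + d \<in> {0, 1}" and right: "j = m \<or> v ! (j + 1) - d \<in> {0, 1}"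
    using movable_unit_exists[OF bits i] by blast
  let ?w = "move_unit n m j d v"
  have w: "?w \<in> vert n m {0, 1}"
    by (rule move_unit_vert[OF n v j left right])
  have step: "Yadj n m v ?w"
    using adj_move_unit[OF v w j d] by (simp add: Yadj_def)
  have "length v = m + 2" using v by (simp add: vert_def)
  then have "flow n m ?w u (\<lambda>i. - ((\<lambda>_. 0)(j := d)) i + f i)"
    using flow_trans[OF flow_sym[OF flow_move_unit] f] j by blast
  moreover have "(\<lambda>i. - ((\<lambda>_. 0)(j := d)) i + f i) = f(j := f j - d)"
    by auto
  moreover have "Suc (flow_cost m (f(j := f j - d))) = flow_cost m f"
    using flow_cost_update[OF j, of f "f j - d"] sgn d by (auto simp: sgn_if split: if_splits)
  ultimately show ?thesis
    using that w step by simp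
qed

lemma flow_imp_Yadj_walk:
  assumes n: "n \<ge> 1" and "v \<in> vert n m {0, 1}" "u \<in> vert n m {0, 1}" "flow n m v u f"
  shows "(Yadj n m ^^ flow_cost m f) v u"
  using assms(2-4)
proof (induction "flow_cost m f" arbitrary: v f)
  case 0
  then have "\<forall>j\<le>m. f j = 0" by (simp add: flow_cost_def)
  then have "v = u" using flow_zero_eq 0 by blast
  then show ?case using 0 by (metis relpowp_0_I)
next
  case (Suc k)
  have "\<exists>i\<le>m. f i \<noteq> 0"
  proof (rule ccontr)
    assume "\<not> ?thesis"
    then have "flow_cost m f = 0" by (simp add: flow_cost_def)
    then show False using Suc.hyps(2) by simp
  qed
  then obtain i where "i \<le> m" "f i \<noteq> 0" by blast
  then obtain w g where w: "w \<in> vert n m {0, 1}" and step: "Yadj n m v w"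
    and g: "flow n m w u g" and cost: "Suc (flow_cost m g) = flow_cost m f"
    using Yadj_step_along_flow[OF n Suc.prems] by blast
  have "k = flow_cost m g" using Suc.hyps(2) cost by simp
  then have "(Yadj n m ^^ k) w u" using Suc.hyps(1)[OF _ w Suc.prems(2) g] by simp
  with step have "(Yadj n m ^^ Suc k) v u" by (rule relpowp_Suc_I2)
  then show ?case using Suc.hyps(2) by simp
qed

lemma bit_differences: "{a - b |a b. a \<in> {0, 1} \<and> b \<in> {0, 1}} = {-1, 0, 1 :: int}"
proof (intro equalityI subsetI)
  fix x :: int assume "x \<in> {-1, 0, 1}"
  then consider "x = 0 - 1" | "x = 0 - 0" | "x = 1 - 0" by force
  then show "x \<in> {a - b |a b. a \<in> {0, 1} \<and> b \<in> {0, 1}}" by cases blast+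
qed auto

lemma Yadj_walk_imp_Zadj_walk:
  assumes n: "n \<ge> 1" and u: "u \<in> vert n m {0, 1}" and walk: "(Yadj n m ^^ k) x y"
  shows "(Zadj n m ^^ k) (vsub n m x u) (vsub n m y u)"
proof -
  have "(adj n m {0, 1} ^^ k) x y" using walk by (simp add: Yadj_def)
  then have "(adj n m {a - b |a b. a \<in> {0, 1} \<and> b \<in> {0, 1}} ^^ k) (vsub n m x u) (vsub n m y u)"
    using relpowp_map[of "adj n m {0, 1}" _ "\<lambda>x. vsub n m x u"] adj_vsub[OF n u] by blast
  then show ?thesis
    unfolding bit_differences Zadj_def .
qed

lemma Zadj_walk_imp_Yadj_walk:
  assumes n: "n \<ge> 1" and v: "v \<in> vert n m {0, 1}" and u: "u \<in> vert n m {0, 1}"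
    and walk: "(Zadj n m ^^ k) (vsub n m v w) (vsub n m u w)"
  shows "\<exists>l\<le>k. (Yadj n m ^^ l) v u"
proof -
  obtain f where "flow n m (vsub n m v w) (vsub n m u w) f" "flow_cost m f \<le> k"
    using walk_imp_flow walk unfolding Zadj_def by blast
  then show ?thesis
    using flow_imp_Yadj_walk[OF n v u] flow_vsub_iff by blast
qed

lemma gdist_le_if_walks:
  assumes "\<And>k. (A ^^ k) x y \<Longrightarrow> \<exists>l\<le>k. (B ^^ l) x' y'"
  shows "gdist B x' y' \<le> gdist A x y"
  unfolding gdist_def
proof (rule Inf_mono)
  fix b assume "b \<in> {enat k |k. (A ^^ k) x y}"
  then obtain k where "b = enat k" "(A ^^ k) x y" by blast
  then show "\<exists>a\<in>{enat k |k. (B ^^ k) x' y'}. a \<le> b"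
    using assms by force
qed

theorem lemma4p4:
  fixes n m :: nat and v u :: "int list"
  assumes "n \<ge> 1"
    and "v \<in> vert n m {0, 1}" and "u \<in> vert n m {0, 1}"
  shows "vsub n m v u \<in> vert n m {-1, 0, 1}
    \<and> gdist (Yadj n m) v u = gdist (Zadj n m) (vsub n m v u) (replicate (m + 2) 0)"
proof -
  note n = assms(1) and v = assms(2) and u = assms(3)
  have "gdist (Zadj n m) (vsub n m v u) (vsub n m u u) \<le> gdist (Yadj n m) v u"
    by (rule gdist_le_if_walks) (use Yadj_walk_imp_Zadj_walk[OF n u] in blast)
  moreover have "gdist (Yadj n m) v u \<le> gdist (Zadj n m) (vsub n m v u) (vsub n m u u)"
    by (rule gdist_le_if_walks) (rule Zadj_walk_imp_Yadj_walk[OF n v u])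
  ultimately show ?thesis
    using vsub_vert[OF n v u] bit_differences vsub_self by (simp add: antisym)
qed

end
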